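(* Let $N\ge 1$, let $\lambda_1,\dots,\lambda_N$ be distinct nonzero real numbers and $\Lambda=\operatorname{diag}(\lambda_1,\dots,\lambda_N)$. Let $u,f,g$ be smooth complex-valued functions and $v_1,v_2$ smooth real-valued functions of $(x,y,t)$ on a domain. Suppose that for each $\alpha=1,\dots,N$ the vector $F_\alpha=(\phi_{1\alpha},\phi_{2\alpha},\phi_{3\alpha})^T$ is a smooth solution of the Lax system $$F_{\alpha,x}=W^x(\lambda_\alpha)F_\alpha,\qquad F_{\alpha,y}=W^y(\lambda_\alpha)F_\alpha,\qquad F_{\alpha,t}=W^t(\lambda_\alpha)F_\alpha .$$ Then the Lax equations $$L_x(\lambda)=[W^x(\lambda),L(\lambda)],\qquad L_y(\lambda)=[W^y(\lambda),L(\lambda)],\qquad L_t(\lambda)=[W^t(\lambda),L(\lambda)]$$ hold for all $\lambda\in\mathbb C\setminus\{\lambda_1,\dots,\lambda_N\}$ if and only if $$\langle\Phi_2,\Phi_1\rangle=-\mathrm{i}\,u,\qquad \langle\Phi_3,\Phi_1\rangle=f,\qquad \langle\Phi_3,\Phi_2\rangle=-g .$$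
   Context: Notation: $\Phi_j=(\phi_{j1},\dots,\phi_{jN})^T\in\mathbb C^N$ for $j=1,2,3$; for $V,W\in\mathbb C^N$, $\langle V,W\rangle=V^*W=\sum_\alpha \bar V_\alpha W_\alpha$, so $\langle\Phi_i,\Lambda^m\Phi_j\rangle=\sum_{\alpha=1}^N\lambda_\alpha^m\bar\phi_{i\alpha}\phi_{j\alpha}$. The Lax matrices are $$W^x(\lambda)=\begin{pmatrix}\mathrm{i}\lambda&0&\mathrm{i}f\\0&\mathrm{i}\lambda&\mathrm{i}g\\ \mathrm{i}\bar f&\mathrm{i}\bar g&0\end{pmatrix},\qquad W^y(\lambda)=\begin{pmatrix}\mathrm{i}\lambda&u&\mathrm{i}f\\-\bar u&-\mathrm{i}\lambda&-\mathrm{i}g\\ \mathrm{i}\bar f&-\mathrm{i}\bar g&0\end{pmatrix},$$ $$W^t(\lambda)=\begin{pmatrix}-2\mathrm{i}\lambda^2+\mathrm{i}|u|^2+\mathrm{i}v_1 & -2u\lambda+\mathrm{i}u_y & -2\mathrm{i}f\lambda-2f_y\\ 2\bar u\lambda+\mathrm{i}\bar u_y & 2\mathrm{i}\lambda^2-\mathrm{i}|u|^2-\mathrm{i}v_2 & 2\mathrm{i}g\lambda-2g_y\\ -2\mathrm{i}\bar f\lambda+2\bar f_y & 2\mathrm{i}\bar g\lambda+2\bar g_y & -2\mathrm{i}(|f|^2-|g|^2)\end{pmatrix}.$$ The matrix $L(\lambda)$ is $$L(\lambda)=C+\sum_{\alpha=1}^N\frac{1}{\lambda-\lambda_\alpha}F_\alpha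 F_\alpha^*,\qquad C=\operatorname{diag}(1,-1,0),$$ i.e. $L(\lambda)_{ab}=C_{ab}+\sum_\alpha \phi_{a\alpha}\bar\phi_{b\alpha}/(\lambda-\lambda_\alpha)$. *)

theory Defs
  imports "HOL-Analysis.Analysis"
begin

type_synonym pt = "real \<times> real \<times> real"

definition pdx :: "(pt \<Rightarrow> 'a::real_normed_vector) \<Rightarrow> pt \<Rightarrow> 'a" where
  "pdx h p = frechet_derivative h (at p) (1, 0, 0)"
definition pdy :: "(pt \<Rightarrow> 'a::real_normed_vector) \<Rightarrow> pt \<Rightarrow> 'a" where
  "pdy h p = frechet_derivative h (at p) (0, 1, 0)"
definition pdt :: "(pt \<Rightarrow> 'a::real_normed_vector) \<Rightarrow> pt \<Rightarrow> 'a" where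
  "pdt h p = frechet_derivative h (at p) (0, 0, 1)"

fun Ck :: "nat \<Rightarrow> pt set \<Rightarrow> (pt \<Rightarrow> 'a::real_normed_vector) \<Rightarrow> bool" where
  "Ck 0 S h = continuous_on S h"
| "Ck (Suc k) S h = ((\<forall>p\<in>S. h differentiable (at p)) \<and>
                      (\<forall>v. Ck k S (\<lambda>p. frechet_derivative h (at p) v)))"

definition smooth_on :: "pt set \<Rightarrow> (pt \<Rightarrow> 'a::real_normed_vector) \<Rightarrow> bool" where
  "smooth_on S h \<longleftrightarrow> (\<forall>k. Ck k S h)"

(* 3x3 complex matrices as entry functions, indices 1..3 *)
type_synonym cmat = "nat \<Rightarrow> nat \<Rightarrow> complex"

definition mat3 :: "complex \<Rightarrow> complex \<Rightarrow> complex \<Rightarrow> complex \<Rightarrow> complex \<Rightarrow> complex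
   \<Rightarrow> complex \<Rightarrow> complex \<Rightarrow> complex \<Rightarrow> cmat" where
  "mat3 a11 a12 a13 a21 a22 a23 a31 a32 a33 = (\<lambda>i j.
     if i = 1 then (if j = 1 then a11 else if j = 2 then a12 else if j = 3 then a13 else 0)
     else if i = 2 then (if j = 1 then a21 else if j = 2 then a22 else if j = 3 then a23 else 0)
     else if i = 3 then (if j = 1 then a31 else if j = 2 then a32 else if j = 3 then a33 else 0)
     else 0)"

definition mmul :: "cmat \<Rightarrow> cmat \<Rightarrow> cmat" where
  "mmul A B = (\<lambda>i j. \<Sum>k\<in>{1..3}. A i k * B k j)"

definition comm :: "cmat \<Rightarrow> cmat \<Rightarrow> cmat" where
  "comm A B = (\<lambda>i j. mmul A B i j - mmul B A i j)"

definition Cmat :: cmat where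
  "Cmat = mat3 1 0 0  0 (-1) 0  0 0 0"

definition Wx :: "(pt \<Rightarrow> complex) \<Rightarrow> (pt \<Rightarrow> complex) \<Rightarrow> complex \<Rightarrow> pt \<Rightarrow> cmat" where
  "Wx f g lam p = mat3
     (\<i> * lam) 0 (\<i> * f p)
     0 (\<i> * lam) (\<i> * g p)
     (\<i> * cnj (f p)) (\<i> * cnj (g p)) 0"

definition Wy :: "(pt \<Rightarrow> complex) \<Rightarrow> (pt \<Rightarrow> complex) \<Rightarrow> (pt \<Rightarrow> complex) \<Rightarrow> complex \<Rightarrow> pt \<Rightarrow> cmat" where
  "Wy u f g lam p = mat3
     (\<i> * lam) (u p) (\<i> * f p)
     (- cnj (u p)) (- \<i> * lam) (- \<i> * g p)
     (\<i> * cnj (f p)) (- \<i> * cnj (g p)) 0"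

definition Wt :: "(pt \<Rightarrow> complex) \<Rightarrow> (pt \<Rightarrow> complex) \<Rightarrow> (pt \<Rightarrow> complex) \<Rightarrow> (pt \<Rightarrow> real)
     \<Rightarrow> (pt \<Rightarrow> real) \<Rightarrow> complex \<Rightarrow> pt \<Rightarrow> cmat" where
  "Wt u f g v1 v2 lam p = mat3
     (- 2 * \<i> * lam\<^sup>2 + \<i> * of_real ((cmod (u p))\<^sup>2) + \<i> * of_real (v1 p))
     (- 2 * u p * lam + \<i> * pdy u p)
     (- 2 * \<i> * f p * lam - 2 * pdy f p)
     (2 * cnj (u p) * lam + \<i> * cnj (pdy u p))
     (2 * \<i> * lam\<^sup>2 - \<i> * of_real ((cmod (u p))\<^sup>2) - \<i> * of_real (v2 p))
     (2 * \<i> * g p * lam - 2 * pdy g p)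
     (- 2 * \<i> * cnj (f p) * lam + 2 * cnj (pdy f p))
     (2 * \<i> * cnj (g p) * lam + 2 * cnj (pdy g p))
     (- 2 * \<i> * of_real ((cmod (f p))\<^sup>2 - (cmod (g p))\<^sup>2))"

(* phi a \<alpha> p = \<phi>_{a\<alpha>} at point p, a \<in> {1,2,3}, \<alpha> \<in> {1..N} *)
definition Lmat :: "nat \<Rightarrow> (nat \<Rightarrow> real) \<Rightarrow> (nat \<Rightarrow> nat \<Rightarrow> pt \<Rightarrow> complex) \<Rightarrow> complex \<Rightarrow> pt \<Rightarrow> cmat" where
  "Lmat N lams phi lam p = (\<lambda>a b. Cmat a b +
     (\<Sum>\<alpha>\<in>{1..N}. phi a \<alpha> p * cnj (phi b \<alpha> p) / (lam - of_real (lams \<alpha>))))"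

definition ip :: "nat \<Rightarrow> (nat \<Rightarrow> nat \<Rightarrow> pt \<Rightarrow> complex) \<Rightarrow> nat \<Rightarrow> nat \<Rightarrow> pt \<Rightarrow> complex" where
  "ip N phi i j p = (\<Sum>\<alpha>\<in>{1..N}. cnj (phi i \<alpha> p) * phi j \<alpha> p)"

end

theory Submission
  imports Defs
begin

(* Since every lambda_alpha is real, W(lambda_alpha) is antihermitian, so the Lax system gives
   (F_alpha F_alpha^* )' = [W(lambda_alpha), F_alpha F_alpha^*].  Each of W^x, W^y, W^t is a
   polynomial W(lam) = W0 + lam W1 + lam^2 W2 of degree at most two, and
   W(lam) - W(mu) = (lam - mu) (W1 + (lam + mu) W2) cancels the pole of each summand of L.  Hence
   [W(lam), L] - L' = [W(lam), C] + [W1 + lam W2, P] + [W2, Q] with the moments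
   P = sum_alpha F_alpha F_alpha^* and Q = sum_alpha lambda_alpha F_alpha F_alpha^*.
   For the x- and y-flows this defect vanishes iff the entries P_13, P_23, P_12 are f, -g, -i u
   (read off at lam = i).  The t-defect also involves u_y, f_y, g_y, which are obtained by
   differentiating these identities along the y-flow: P_y = [W^y(0), P] + [W^y_1, Q]. *)

definition hermitian :: "cmat \<Rightarrow> bool" where
  "hermitian M \<longleftrightarrow> (\<forall>a b. cnj (M a b) = M b a)"

definition antihermitian :: "cmat \<Rightarrow> bool" where
  "antihermitian W \<longleftrightarrow> (\<forall>a b. cnj (W a b) = - W b a)"

definition qpoly :: "cmat \<Rightarrow> cmat \<Rightarrow> cmat \<Rightarrow> complex \<Rightarrow> cmat" where
  "qpoly W0 W1 W2 lam = (\<lambda>a b. W0 a b + lam * W1 a b + lam\<^sup>2 * W2 a b)"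

text \<open>The (j, i) entry of \<^term>\<open>moment N lams phi k p\<close> is the paper's
  \<open>\<langle>\<Phi>\<^sub>i, \<Lambda>\<^sup>k \<Phi>\<^sub>j\<rangle>\<close>; the moments 0 and 1 are the \<open>P\<close> and \<open>Q\<close> of the header.\<close>

definition moment :: "nat \<Rightarrow> (nat \<Rightarrow> real) \<Rightarrow> (nat \<Rightarrow> nat \<Rightarrow> pt \<Rightarrow> complex) \<Rightarrow> nat \<Rightarrow> pt \<Rightarrow> cmat" where
  "moment N lams phi k p =
     (\<lambda>a b. \<Sum>\<alpha>\<in>{1..N}. phi a \<alpha> p * cnj (phi b \<alpha> p) * of_real (lams \<alpha>) ^ k)"

definition Lax_defect :: "cmat \<Rightarrow> cmat \<Rightarrow> cmat \<Rightarrow> complex \<Rightarrow> cmat \<Rightarrow> cmat \<Rightarrow> cmat" where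
  "Lax_defect W0 W1 W2 lam M0 M1 = (\<lambda>a b. comm (qpoly W0 W1 W2 lam) Cmat a b
     + comm W1 M0 a b + lam * comm W2 M0 a b + comm W2 M1 a b)"

lemma comm_qpoly_left:
  "comm (qpoly W0 W1 W2 lam) M a b = comm W0 M a b + lam * comm W1 M a b + lam\<^sup>2 * comm W2 M a b"
  unfolding comm_def mmul_def qpoly_def
  by (simp add: sum.distrib sum_subtractf sum_distrib_left algebra_simps)

lemma comm_zero_left [simp]: "comm (\<lambda>_ _. 0) M a b = 0"
  by (simp add: comm_def mmul_def)

lemma comm_add_right: "comm W (\<lambda>a b. A a b + B a b) a b = comm W A a b + comm W B a b"
  unfolding comm_def mmul_def by (simp add: sum.distrib algebra_simps)

lemma comm_sum_right: "comm W (\<lambda>a b. \<Sum>\<alpha>\<in>S. M \<alpha> a b) a b = (\<Sum>\<alpha>\<in>S. comm W (M \<alpha>) a b)"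
  unfolding comm_def mmul_def
  by (simp add: sum_subtractf sum_distrib_left sum_distrib_right sum.swap[of _ S])

lemma comm_mult_right: "comm W (\<lambda>a b. M a b * c) a b = comm W M a b * c"
  unfolding comm_def mmul_def
  by (simp add: sum_distrib_left right_diff_distrib mult.commute mult.left_commute)

lemma comm_divide_right: "comm W (\<lambda>a b. M a b / c) a b = comm W M a b / c"
  using comm_mult_right[of W M "inverse c"] by (simp add: divide_inverse)

lemma flow_outer_eq_comm:
  fixes F d :: "nat \<Rightarrow> complex"
  assumes "\<forall>a\<in>{1..3}. d a = (\<Sum>k\<in>{1..3}. W a k * F k)"
    and "antihermitian W" and "a \<in> {1..3}" "b \<in> {1..3}"
  shows "d a * cnj (F b) + F a * cnj (d b) = comm W (\<lambda>a b. F a * cnj (F b)) a b"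
proof -
  have "cnj (d b) = - (\<Sum>k\<in>{1..3}. cnj (F k) * W k b)"
    using assms by (simp add: antihermitian_def sum_negf mult.commute)
  then show ?thesis
    using assms by (simp add: comm_def mmul_def sum_distrib_left sum_distrib_right mult_ac)
qed

lemma flow_outer_eq_comm_qpoly:
  fixes F d :: "nat \<Rightarrow> complex"
  assumes "\<forall>a\<in>{1..3}. d a = (\<Sum>k\<in>{1..3}. qpoly W0 W1 W2 \<mu> a k * F k)"
    and "antihermitian (qpoly W0 W1 W2 \<mu>)" and "a \<in> {1..3}" "b \<in> {1..3}"
  shows "d a * cnj (F b) + F a * cnj (d b) = comm W0 (\<lambda>a b. F a * cnj (F b)) a b
     + \<mu> * comm W1 (\<lambda>a b. F a * cnj (F b)) a b + \<mu>\<^sup>2 * comm W2 (\<lambda>a b. F a * cnj (F b)) a b"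
  using flow_outer_eq_comm[OF assms] by (simp add: comm_qpoly_left)

lemma sum_flow_outer_eq_moments:
  fixes phi :: "nat \<Rightarrow> nat \<Rightarrow> pt \<Rightarrow> complex" and d :: "nat \<Rightarrow> nat \<Rightarrow> complex"
  assumes flow: "\<forall>\<alpha>\<in>{1..N}. \<forall>a\<in>{1..3}.
      d a \<alpha> = (\<Sum>k\<in>{1..3}. qpoly W0 W1 W2 (of_real (lams \<alpha>)) a k * phi k \<alpha> p)"
    and anti: "\<forall>\<alpha>\<in>{1..N}. antihermitian (qpoly W0 W1 W2 (of_real (lams \<alpha>)))"
    and ab: "a \<in> {1..3}" "b \<in> {1..3}"
  shows "(\<Sum>\<alpha>\<in>{1..N}. d a \<alpha> * cnj (phi b \<alpha> p) + phi a \<alpha> p * cnj (d b \<alpha>))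
    = comm W0 (moment N lams phi 0 p) a b + comm W1 (moment N lams phi 1 p) a b
      + comm W2 (moment N lams phi 2 p) a b"
proof -
  have "d a \<alpha> * cnj (phi b \<alpha> p) + phi a \<alpha> p * cnj (d b \<alpha>)
      = comm W0 (\<lambda>a b. phi a \<alpha> p * cnj (phi b \<alpha> p)) a b
      + comm W1 (\<lambda>a b. phi a \<alpha> p * cnj (phi b \<alpha> p)) a b * of_real (lams \<alpha>)
      + comm W2 (\<lambda>a b. phi a \<alpha> p * cnj (phi b \<alpha> p)) a b * of_real (lams \<alpha>) ^ 2"
    if "\<alpha> \<in> {1..N}" for \<alpha>
    using flow_outer_eq_comm_qpoly[where F = "\<lambda>a. phi a \<alpha> p" and d = "\<lambda>a. d a \<alpha>"] flow anti ab that
    by (simp add: mult.commute)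
  then show ?thesis
    unfolding moment_def comm_sum_right comm_mult_right by (simp add: sum.distrib)
qed

lemma sum_flow_outer_resolvent:
  fixes phi :: "nat \<Rightarrow> nat \<Rightarrow> pt \<Rightarrow> complex" and d :: "nat \<Rightarrow> nat \<Rightarrow> complex"
  assumes flow: "\<forall>\<alpha>\<in>{1..N}. \<forall>a\<in>{1..3}.
      d a \<alpha> = (\<Sum>k\<in>{1..3}. qpoly W0 W1 W2 (of_real (lams \<alpha>)) a k * phi k \<alpha> p)"
    and anti: "\<forall>\<alpha>\<in>{1..N}. antihermitian (qpoly W0 W1 W2 (of_real (lams \<alpha>)))"
    and lam: "lam \<notin> of_real ` lams ` {1..N}"
    and ab: "a \<in> {1..3}" "b \<in> {1..3}"
  shows "(\<Sum>\<alpha>\<in>{1..N}. (d a \<alpha> * cnj (phi b \<alpha> p) + phi a \<alpha> p * cnj (d b \<alpha>)) / (lam - of_real (lams \<alpha>)))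
    = comm (qpoly W0 W1 W2 lam) (Lmat N lams phi lam p) a b
      - Lax_defect W0 W1 W2 lam (moment N lams phi 0 p) (moment N lams phi 1 p) a b"
proof -
  define E where "E \<alpha> = (\<lambda>a b. phi a \<alpha> p * cnj (phi b \<alpha> p))" for \<alpha>
  define c where "c W \<alpha> = comm W (E \<alpha>) a b" for W \<alpha>
  have "(d a \<alpha> * cnj (phi b \<alpha> p) + phi a \<alpha> p * cnj (d b \<alpha>)) / (lam - of_real (lams \<alpha>))
      = comm (qpoly W0 W1 W2 lam) (E \<alpha>) a b / (lam - of_real (lams \<alpha>))
        - (c W1 \<alpha> + lam * c W2 \<alpha> + c W2 \<alpha> * of_real (lams \<alpha>))"
    if "\<alpha> \<in> {1..N}" for \<alpha>
  proof -
    have "lam - of_real (lams \<alpha>) \<noteq> 0" using lam that by auto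
    moreover have "d a \<alpha> * cnj (phi b \<alpha> p) + phi a \<alpha> p * cnj (d b \<alpha>)
        = c W0 \<alpha> + of_real (lams \<alpha>) * c W1 \<alpha> + (of_real (lams \<alpha>))\<^sup>2 * c W2 \<alpha>"
      using flow_outer_eq_comm_qpoly[where F = "\<lambda>a. phi a \<alpha> p" and d = "\<lambda>a. d a \<alpha>"]
        flow anti ab that
      by (simp add: c_def E_def)
    moreover have "comm (qpoly W0 W1 W2 lam) (E \<alpha>) a b = c W0 \<alpha> + lam * c W1 \<alpha> + lam\<^sup>2 * c W2 \<alpha>"
      by (simp add: comm_qpoly_left c_def)
    ultimately show ?thesis
      by (simp add: field_simps power2_eq_square)
  qed
  moreover have "Lmat N lams phi lam p
      = (\<lambda>a b. Cmat a b + (\<Sum>\<alpha>\<in>{1..N}. E \<alpha> a b / (lam - of_real (lams \<alpha>))))"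
    by (simp add: Lmat_def E_def)
  moreover have "moment N lams phi k p = (\<lambda>a b. \<Sum>\<alpha>\<in>{1..N}. E \<alpha> a b * of_real (lams \<alpha>) ^ k)" for k
    by (simp add: moment_def E_def)
  ultimately show ?thesis
    by (simp add: Lax_defect_def comm_add_right comm_sum_right comm_divide_right comm_mult_right
        c_def sum_subtractf sum.distrib sum_distrib_left)
qed

lemma has_derivative_outer_sum:
  fixes phi :: "nat \<Rightarrow> nat \<Rightarrow> 'a::real_normed_vector \<Rightarrow> complex"
  assumes "\<And>\<alpha>. \<alpha> \<in> S \<Longrightarrow> phi a \<alpha> differentiable (at p)"
    and "\<And>\<alpha>. \<alpha> \<in> S \<Longrightarrow> phi b \<alpha> differentiable (at p)"
  shows "((\<lambda>q. \<Sum>\<alpha>\<in>S. phi a \<alpha> q * cnj (phi b \<alpha> q) * w \<alpha>) has_derivative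
    (\<lambda>v. \<Sum>\<alpha>\<in>S. (frechet_derivative (phi a \<alpha>) (at p) v * cnj (phi b \<alpha> p)
                   + phi a \<alpha> p * cnj (frechet_derivative (phi b \<alpha>) (at p) v)) * w \<alpha>)) (at p)"
proof -
  have "(phi c \<alpha> has_derivative frechet_derivative (phi c \<alpha>) (at p)) (at p)"
    if "c = a \<or> c = b" "\<alpha> \<in> S" for c \<alpha>
    using assms that frechet_derivative_works by blast
  then show ?thesis
    by (auto intro!: derivative_eq_intros bounded_linear.has_derivative[OF bounded_linear_cnj]
        simp: algebra_simps)
qed

definition Wx1 :: cmat where "Wx1 = mat3 \<i> 0 0  0 \<i> 0  0 0 0"
definition Wy1 :: cmat where "Wy1 = mat3 \<i> 0 0  0 (- \<i>) 0  0 0 0"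
definition Wt1 :: "complex \<Rightarrow> complex \<Rightarrow> complex \<Rightarrow> cmat" where
  "Wt1 u f g = mat3 0 (- 2 * u) (- 2 * \<i> * f)  (2 * cnj u) 0 (2 * \<i> * g)
     (- 2 * \<i> * cnj f) (2 * \<i> * cnj g) 0"
definition Wt2 :: cmat where "Wt2 = mat3 (- 2 * \<i>) 0 0  0 (2 * \<i>) 0  0 0 0"

lemma qpoly_Wx: "qpoly (Wx f g 0 p) Wx1 (\<lambda>_ _. 0) lam = Wx f g lam p"
  by (simp add: fun_eq_iff Wx_def Wx1_def qpoly_def mat3_def)

lemma qpoly_Wy: "qpoly (Wy u f g 0 p) Wy1 (\<lambda>_ _. 0) lam = Wy u f g lam p"
  by (simp add: fun_eq_iff Wy_def Wy1_def qpoly_def mat3_def)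

lemma qpoly_Wt: "qpoly (Wt u f g v1 v2 0 p) (Wt1 (u p) (f p) (g p)) Wt2 lam = Wt u f g v1 v2 lam p"
  by (simp add: fun_eq_iff Wt_def Wt1_def Wt2_def qpoly_def mat3_def)

lemma antihermitian_Wx: "antihermitian (Wx f g (of_real \<mu>) p)"
  by (simp add: antihermitian_def Wx_def mat3_def)

lemma antihermitian_Wy: "antihermitian (Wy u f g (of_real \<mu>) p)"
  by (simp add: antihermitian_def Wy_def mat3_def)

lemma antihermitian_Wt: "antihermitian (Wt u f g v1 v2 (of_real \<mu>) p)"
  by (simp add: antihermitian_def Wt_def mat3_def)

lemma sum_1_3: "(\<Sum>k\<in>{1..3::nat}. h k) = h 1 + h 2 + h 3"
  by (simp add: numeral_3_eq_3 numeral_2_eq_2)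

lemma Lax_defect_entries:
  "Lax_defect (Wx f g 0 p) Wx1 (\<lambda>_ _. 0) lam M0 M1 1 3 = \<i> * (M0 1 3 - f p)"
  "Lax_defect (Wx f g 0 p) Wx1 (\<lambda>_ _. 0) lam M0 M1 2 3 = \<i> * (M0 2 3 + g p)"
  "Lax_defect (Wy u f g 0 p) Wy1 (\<lambda>_ _. 0) lam M0 M1 1 2 = 2 * \<i> * (M0 1 2 + \<i> * u p)"
  unfolding Lax_defect_def comm_def mmul_def sum_1_3
  by (simp_all add: qpoly_def mat3_def Cmat_def Wx_def Wx1_def Wy_def Wy1_def algebra_simps)

lemma hermitian_swap: "hermitian M \<Longrightarrow> M a b = cnj (M b a)"
  by (simp add: hermitian_def)

lemma mem_1_3_iff: "a \<in> {1..3} \<longleftrightarrow> a = 1 \<or> a = 2 \<or> a = (3::nat)"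
  by auto

lemma Lax_defect_x_vanishes:
  assumes "hermitian M0" "M0 1 3 = f p" "M0 2 3 = - g p" "a \<in> {1..3}" "b \<in> {1..3}"
  shows "Lax_defect (Wx f g 0 p) Wx1 (\<lambda>_ _. 0) lam M0 M1 a b = 0"
proof -
  have M: "M0 1 3 = f p" "M0 3 1 = cnj (f p)" "M0 2 3 = - g p" "M0 3 2 = - cnj (g p)"
    using assms(2,3) hermitian_swap[OF assms(1), of 3 1] hermitian_swap[OF assms(1), of 3 2]
    by simp_all
  from assms(4,5) show ?thesis
    unfolding Lax_defect_def comm_def mmul_def sum_1_3 mem_1_3_iff
    by (elim disjE)
      (simp_all add: qpoly_def mat3_def Cmat_def Wx_def Wx1_def M M[unfolded One_nat_def])
qed

lemma Lax_defect_y_vanishes: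
  assumes "hermitian M0" "M0 1 2 = - \<i> * u p" "M0 1 3 = f p" "M0 2 3 = - g p"
    "a \<in> {1..3}" "b \<in> {1..3}"
  shows "Lax_defect (Wy u f g 0 p) Wy1 (\<lambda>_ _. 0) lam M0 M1 a b = 0"
proof -
  have M: "M0 1 2 = - \<i> * u p" "M0 2 1 = \<i> * cnj (u p)" "M0 1 3 = f p" "M0 3 1 = cnj (f p)"
    "M0 2 3 = - g p" "M0 3 2 = - cnj (g p)"
    using assms(2-4) hermitian_swap[OF assms(1), of 2 1] hermitian_swap[OF assms(1), of 3 1]
      hermitian_swap[OF assms(1), of 3 2]
    by simp_all
  from assms(5,6) show ?thesis
    unfolding Lax_defect_def comm_def mmul_def sum_1_3 mem_1_3_iff
    by (elim disjE)
      (simp_all add: qpoly_def mat3_def Cmat_def Wy_def Wy1_def M M[unfolded One_nat_def] algebra_simps)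
qed

lemma Lax_defect_t_vanishes:
  assumes "hermitian M0" "hermitian M1"
    and "M0 1 2 = - \<i> * u p" "M0 1 3 = f p" "M0 2 3 = - g p"
    and uy: "pdy u p = \<i> * (comm (Wy u f g 0 p) M0 1 2 + comm Wy1 M1 1 2)"
    and fy: "pdy f p = comm (Wy u f g 0 p) M0 1 3 + comm Wy1 M1 1 3"
    and gy: "pdy g p = - (comm (Wy u f g 0 p) M0 2 3 + comm Wy1 M1 2 3)"
    and "a \<in> {1..3}" "b \<in> {1..3}"
  shows "Lax_defect (Wt u f g v1 v2 0 p) (Wt1 (u p) (f p) (g p)) Wt2 lam M0 M1 a b = 0"
proof -
  have M: "M0 1 2 = - \<i> * u p" "M0 2 1 = \<i> * cnj (u p)" "M0 1 3 = f p" "M0 3 1 = cnj (f p)"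
    "M0 2 3 = - g p" "M0 3 2 = - cnj (g p)"
    using assms(3-5) hermitian_swap[OF assms(1), of 2 1] hermitian_swap[OF assms(1), of 3 1]
      hermitian_swap[OF assms(1), of 3 2]
    by simp_all
  have herm: "cnj (M0 a b) = M0 b a" "cnj (M1 a b) = M1 b a" for a b
    using assms(1,2) by (simp_all add: hermitian_def)
  from assms(9,10) uy fy gy show ?thesis
    unfolding Lax_defect_def comm_def mmul_def sum_1_3 mem_1_3_iff
    by (elim disjE) (simp_all add: qpoly_def mat3_def Cmat_def Wt_def Wt1_def Wt2_def Wy_def Wy1_def
        M M[unfolded One_nat_def] herm)
qed

lemma frechet_derivative_Lmat_flow:
  assumes diff: "\<And>a \<alpha>. a \<in> {1..3} \<Longrightarrow> \<alpha> \<in> {1..N} \<Longrightarrow> phi a \<alpha> differentiable (at p)"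
    and flow: "\<forall>\<alpha>\<in>{1..N}. \<forall>a\<in>{1..3}. frechet_derivative (phi a \<alpha>) (at p) v
      = (\<Sum>k\<in>{1..3}. qpoly W0 W1 W2 (of_real (lams \<alpha>)) a k * phi k \<alpha> p)"
    and anti: "\<forall>\<alpha>\<in>{1..N}. antihermitian (qpoly W0 W1 W2 (of_real (lams \<alpha>)))"
    and lam: "lam \<notin> of_real ` lams ` {1..N}"
    and ab: "a \<in> {1..3}" "b \<in> {1..3}"
  shows "frechet_derivative (\<lambda>q. Lmat N lams phi lam q a b) (at p) v
    = comm (qpoly W0 W1 W2 lam) (Lmat N lams phi lam p) a b
      - Lax_defect W0 W1 W2 lam (moment N lams phi 0 p) (moment N lams phi 1 p) a b"
proof -
  have Lmat_entry: "(\<lambda>q. Lmat N lams phi lam q a b) = (\<lambda>q. (\<Sum>\<alpha>\<in>{1..N}.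
      phi a \<alpha> q * cnj (phi b \<alpha> q) * inverse (lam - of_real (lams \<alpha>))) + Cmat a b)"
    by (simp add: fun_eq_iff Lmat_def divide_inverse)
  have "((\<lambda>q. Lmat N lams phi lam q a b) has_derivative (\<lambda>v. \<Sum>\<alpha>\<in>{1..N}.
      (frechet_derivative (phi a \<alpha>) (at p) v * cnj (phi b \<alpha> p)
        + phi a \<alpha> p * cnj (frechet_derivative (phi b \<alpha>) (at p) v))
        * inverse (lam - of_real (lams \<alpha>)))) (at p)"
    unfolding Lmat_entry
    by (intro has_derivative_add_const has_derivative_outer_sum diff ab)
  then have "frechet_derivative (\<lambda>q. Lmat N lams phi lam q a b) (at p) v
    = (\<Sum>\<alpha>\<in>{1..N}. (frechet_derivative (phi a \<alpha>) (at p) v * cnj (phi b \<alpha> p)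
        + phi a \<alpha> p * cnj (frechet_derivative (phi b \<alpha>) (at p) v))
        * inverse (lam - of_real (lams \<alpha>)))"
    by (simp add: frechet_derivative_at[symmetric])
  also have "\<dots> = comm (qpoly W0 W1 W2 lam) (Lmat N lams phi lam p) a b
      - Lax_defect W0 W1 W2 lam (moment N lams phi 0 p) (moment N lams phi 1 p) a b"
    using sum_flow_outer_resolvent[where d = "\<lambda>a \<alpha>. frechet_derivative (phi a \<alpha>) (at p) v"
        and phi = phi and p = p, OF flow anti lam ab]
    by (simp add: divide_inverse)
  finally show ?thesis .
qed

lemma smooth_on_imp_differentiable: "smooth_on S h \<Longrightarrow> p \<in> S \<Longrightarrow> h differentiable (at p)"
  unfolding smooth_on_def by (metis Ck.simps(2))

lemma ip_eq_moment: "ip N phi i j p = moment N lams phi 0 p j i"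
  by (simp add: ip_def moment_def mult.commute)

lemma hermitian_moment: "hermitian (moment N lams phi k p)"
  by (simp add: hermitian_def moment_def mult.commute)

locale Lax_system =
  fixes N :: nat and lams :: "nat \<Rightarrow> real" and D :: "pt set"
    and u f g :: "pt \<Rightarrow> complex" and v1 v2 :: "pt \<Rightarrow> real"
    and phi :: "nat \<Rightarrow> nat \<Rightarrow> pt \<Rightarrow> complex"
  assumes open_D: "open D"
    and phi_differentiable:
      "\<And>a \<alpha> p. a \<in> {1..3} \<Longrightarrow> \<alpha> \<in> {1..N} \<Longrightarrow> p \<in> D \<Longrightarrow> phi a \<alpha> differentiable (at p)"
    and flows: "\<forall>\<alpha>\<in>{1..N}. \<forall>p\<in>D. \<forall>a\<in>{1..3}.
           pdx (phi a \<alpha>) p = (\<Sum>b\<in>{1..3}. Wx f g (of_real (lams \<alpha>)) p a b * phi b \<alpha> p)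
         \<and> pdy (phi a \<alpha>) p = (\<Sum>b\<in>{1..3}. Wy u f g (of_real (lams \<alpha>)) p a b * phi b \<alpha> p)
         \<and> pdt (phi a \<alpha>) p = (\<Sum>b\<in>{1..3}. Wt u f g v1 v2 (of_real (lams \<alpha>)) p a b * phi b \<alpha> p)"
begin

abbreviation P :: "pt \<Rightarrow> cmat" where "P \<equiv> moment N lams phi 0"
abbreviation Q :: "pt \<Rightarrow> cmat" where "Q \<equiv> moment N lams phi 1"

abbreviation defect_x :: "complex \<Rightarrow> pt \<Rightarrow> cmat" where
  "defect_x lam p \<equiv> Lax_defect (Wx f g 0 p) Wx1 (\<lambda>_ _. 0) lam (P p) (Q p)"
abbreviation defect_y :: "complex \<Rightarrow> pt \<Rightarrow> cmat" where
  "defect_y lam p \<equiv> Lax_defect (Wy u f g 0 p) Wy1 (\<lambda>_ _. 0) lam (P p) (Q p)"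
abbreviation defect_t :: "complex \<Rightarrow> pt \<Rightarrow> cmat" where
  "defect_t lam p \<equiv> Lax_defect (Wt u f g v1 v2 0 p) (Wt1 (u p) (f p) (g p)) Wt2 lam (P p) (Q p)"

lemma ip_eq_P: "ip N phi i j p = P p j i"
  by (rule ip_eq_moment)

lemma flow_x: "p \<in> D \<Longrightarrow> \<forall>\<alpha>\<in>{1..N}. \<forall>a\<in>{1..3}. pdx (phi a \<alpha>) p
    = (\<Sum>k\<in>{1..3}. qpoly (Wx f g 0 p) Wx1 (\<lambda>_ _. 0) (of_real (lams \<alpha>)) a k * phi k \<alpha> p)"
  using flows by (simp add: qpoly_Wx)

lemma flow_y: "p \<in> D \<Longrightarrow> \<forall>\<alpha>\<in>{1..N}. \<forall>a\<in>{1..3}. pdy (phi a \<alpha>) p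
    = (\<Sum>k\<in>{1..3}. qpoly (Wy u f g 0 p) Wy1 (\<lambda>_ _. 0) (of_real (lams \<alpha>)) a k * phi k \<alpha> p)"
  using flows by (simp add: qpoly_Wy)

lemma flow_t: "p \<in> D \<Longrightarrow> \<forall>\<alpha>\<in>{1..N}. \<forall>a\<in>{1..3}. pdt (phi a \<alpha>) p
    = (\<Sum>k\<in>{1..3}. qpoly (Wt u f g v1 v2 0 p) (Wt1 (u p) (f p) (g p)) Wt2 (of_real (lams \<alpha>)) a k
        * phi k \<alpha> p)"
  using flows by (simp add: qpoly_Wt)

lemma Lax_equations_iff_defects:
  assumes p: "p \<in> D" and lam: "lam \<notin> of_real ` lams ` {1..N}" and ab: "a \<in> {1..3}" "b \<in> {1..3}"
  shows "(pdx (\<lambda>q. Lmat N lams phi lam q a b) p = comm (Wx f g lam p) (Lmat N lams phi lam p) a b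
        \<and> pdy (\<lambda>q. Lmat N lams phi lam q a b) p = comm (Wy u f g lam p) (Lmat N lams phi lam p) a b
        \<and> pdt (\<lambda>q. Lmat N lams phi lam q a b) p = comm (Wt u f g v1 v2 lam p) (Lmat N lams phi lam p) a b)
    \<longleftrightarrow> defect_x lam p a b = 0 \<and> defect_y lam p a b = 0 \<and> defect_t lam p a b = 0"
proof -
  note diff = phi_differentiable[OF _ _ p]
  have x: "pdx (\<lambda>q. Lmat N lams phi lam q a b) p
      = comm (Wx f g lam p) (Lmat N lams phi lam p) a b - defect_x lam p a b"
    using frechet_derivative_Lmat_flow[OF diff flow_x[OF p, unfolded pdx_def] _ lam ab]
    by (simp add: pdx_def qpoly_Wx antihermitian_Wx)
  have y: "pdy (\<lambda>q. Lmat N lams phi lam q a b) p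
      = comm (Wy u f g lam p) (Lmat N lams phi lam p) a b - defect_y lam p a b"
    using frechet_derivative_Lmat_flow[OF diff flow_y[OF p, unfolded pdy_def] _ lam ab]
    by (simp add: pdy_def qpoly_Wy antihermitian_Wy)
  have t: "pdt (\<lambda>q. Lmat N lams phi lam q a b) p
      = comm (Wt u f g v1 v2 lam p) (Lmat N lams phi lam p) a b - defect_t lam p a b"
    using frechet_derivative_Lmat_flow[OF diff flow_t[OF p, unfolded pdt_def] _ lam ab]
    by (simp add: pdt_def qpoly_Wt antihermitian_Wt)
  show ?thesis
    unfolding x y t by simp
qed

lemma pdy_multiple_of_P:
  assumes p: "p \<in> D" and ab: "a \<in> {1..3}" "b \<in> {1..3}"
    and h: "\<forall>q\<in>D. h q = c * P q a b"
  shows "pdy h p = c * (comm (Wy u f g 0 p) (P p) a b + comm Wy1 (Q p) a b)"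
proof -
  note diff = phi_differentiable[OF _ _ p]
  have "((\<lambda>q. c * P q a b) has_derivative (\<lambda>v. c * (\<Sum>\<alpha>\<in>{1..N}.
      (frechet_derivative (phi a \<alpha>) (at p) v * cnj (phi b \<alpha> p)
        + phi a \<alpha> p * cnj (frechet_derivative (phi b \<alpha>) (at p) v))))) (at p)"
    using has_derivative_outer_sum[of "{1..N}" phi a p b "\<lambda>_. 1"] diff ab
    by (simp add: moment_def has_derivative_mult_right)
  then have "(h has_derivative (\<lambda>v. c * (\<Sum>\<alpha>\<in>{1..N}.
      (frechet_derivative (phi a \<alpha>) (at p) v * cnj (phi b \<alpha> p)
        + phi a \<alpha> p * cnj (frechet_derivative (phi b \<alpha>) (at p) v))))) (at p)"
    by (rule has_derivative_transform_within_open[OF _ open_D p]) (simp_all add: h)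
  then have "pdy h p = c * (\<Sum>\<alpha>\<in>{1..N}. pdy (phi a \<alpha>) p * cnj (phi b \<alpha> p)
        + phi a \<alpha> p * cnj (pdy (phi b \<alpha>) p))"
    unfolding pdy_def by (simp add: frechet_derivative_at[symmetric])
  also have "\<dots> = c * (comm (Wy u f g 0 p) (P p) a b + comm Wy1 (Q p) a b)"
    using sum_flow_outer_eq_moments[where d = "\<lambda>a \<alpha>. pdy (phi a \<alpha>) p"
        and phi = phi and p = p, OF flow_y[OF p] _ ab]
    by (simp add: qpoly_Wy antihermitian_Wy)
  finally show ?thesis .
qed

lemma defects_iff_ip:
  "(\<forall>p\<in>D. \<forall>lam. lam \<notin> of_real ` lams ` {1..N} \<longrightarrow> (\<forall>a\<in>{1..3}. \<forall>b\<in>{1..3}.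
      defect_x lam p a b = 0 \<and> defect_y lam p a b = 0 \<and> defect_t lam p a b = 0))
  \<longleftrightarrow> (\<forall>p\<in>D. ip N phi 2 1 p = - \<i> * u p \<and> ip N phi 3 1 p = f p \<and> ip N phi 3 2 p = - g p)"
  (is "?defects \<longleftrightarrow> ?ip")
proof
  assume defects: ?defects
  show ?ip
  proof
    fix p assume p: "p \<in> D"
    have "\<i> \<notin> of_real ` lams ` {1..N}"
      by (auto simp: complex_eq_iff)
    with defects p have "defect_x \<i> p 1 3 = 0" "defect_x \<i> p 2 3 = 0" "defect_y \<i> p 1 2 = 0"
      by auto
    then show "ip N phi 2 1 p = - \<i> * u p \<and> ip N phi 3 1 p = f p \<and> ip N phi 3 2 p = - g p"
      by (simp add: ip_eq_P Lax_defect_entries[unfolded One_nat_def] eq_neg_iff_add_eq_0)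
  qed
next
  assume ip: ?ip
  show ?defects
  proof (intro ballI allI impI conjI)
    fix p and lam :: complex and a b :: nat
    assume p: "p \<in> D" and ab: "a \<in> {1..3}" "b \<in> {1..3}"
    have P_entries: "P p 1 2 = - \<i> * u p" "P p 1 3 = f p" "P p 2 3 = - g p"
      using ip p by (simp_all add: ip_eq_P)
    have "\<forall>q\<in>D. u q = \<i> * P q 1 2" "\<forall>q\<in>D. f q = 1 * P q 1 3" "\<forall>q\<in>D. g q = - 1 * P q 2 3"
      using ip by (simp_all add: ip_eq_P)
    from this[THEN pdy_multiple_of_P[OF p, rotated 2]]
    have "pdy u p = \<i> * (comm (Wy u f g 0 p) (P p) 1 2 + comm Wy1 (Q p) 1 2)"
      "pdy f p = comm (Wy u f g 0 p) (P p) 1 3 + comm Wy1 (Q p) 1 3"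
      "pdy g p = - (comm (Wy u f g 0 p) (P p) 2 3 + comm Wy1 (Q p) 2 3)"
      by simp_all
    with P_entries ab
    show "defect_x lam p a b = 0" "defect_y lam p a b = 0" "defect_t lam p a b = 0"
      by (simp_all add: Lax_defect_x_vanishes Lax_defect_y_vanishes Lax_defect_t_vanishes
          hermitian_moment)
  qed
qed

end

theorem lemma1:
  fixes N :: nat and lams :: "nat \<Rightarrow> real" and D :: "pt set"
    and u f g :: "pt \<Rightarrow> complex" and v1 v2 :: "pt \<Rightarrow> real"
    and phi :: "nat \<Rightarrow> nat \<Rightarrow> pt \<Rightarrow> complex"
  assumes "N \<ge> 1"
    and "inj_on lams {1..N}"
    and "\<forall>\<alpha>\<in>{1..N}. lams \<alpha> \<noteq> 0"
    and "open D" and "connected D" and "D \<noteq> {}"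
    and "smooth_on D u" and "smooth_on D f" and "smooth_on D g"
    and "smooth_on D v1" and "smooth_on D v2"
    and "\<forall>a\<in>{1..3}. \<forall>\<alpha>\<in>{1..N}. smooth_on D (phi a \<alpha>)"
    and "\<forall>\<alpha>\<in>{1..N}. \<forall>p\<in>D. \<forall>a\<in>{1..3}.
           pdx (phi a \<alpha>) p = (\<Sum>b\<in>{1..3}. Wx f g (of_real (lams \<alpha>)) p a b * phi b \<alpha> p)
         \<and> pdy (phi a \<alpha>) p = (\<Sum>b\<in>{1..3}. Wy u f g (of_real (lams \<alpha>)) p a b * phi b \<alpha> p)
         \<and> pdt (phi a \<alpha>) p = (\<Sum>b\<in>{1..3}. Wt u f g v1 v2 (of_real (lams \<alpha>)) p a b * phi b \<alpha> p)"
  shows "(\<forall>p\<in>D. \<forall>lam. lam \<notin> of_real ` lams ` {1..N} \<longrightarrow> (\<forall>a\<in>{1..3}. \<forall>b\<in>{1..3}.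
             pdx (\<lambda>q. Lmat N lams phi lam q a b) p = comm (Wx f g lam p) (Lmat N lams phi lam p) a b
           \<and> pdy (\<lambda>q. Lmat N lams phi lam q a b) p = comm (Wy u f g lam p) (Lmat N lams phi lam p) a b
           \<and> pdt (\<lambda>q. Lmat N lams phi lam q a b) p = comm (Wt u f g v1 v2 lam p) (Lmat N lams phi lam p) a b))
     \<longleftrightarrow>
         (\<forall>p\<in>D. ip N phi 2 1 p = - \<i> * u p \<and> ip N phi 3 1 p = f p \<and> ip N phi 3 2 p = - g p)"
proof -
  \<comment> \<open>Neither the distinctness and nonvanishing of the \<open>\<lambda>\<^sub>\<alpha>\<close>, nor \<open>N \<ge> 1\<close>, nor
     connectedness and nonemptiness of \<open>D\<close>, nor the smoothness of \<open>u, f, g, v\<^sub>1, v\<^sub>2\<close>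
     is needed: only openness of \<open>D\<close> and differentiability of the \<open>\<phi>\<close>.\<close>
  interpret Lax_system N lams D u f g v1 v2 phi
  proof
    show "phi a \<alpha> differentiable (at p)" if "a \<in> {1..3}" "\<alpha> \<in> {1..N}" "p \<in> D" for a \<alpha> p
      using assms(12) that smooth_on_imp_differentiable by blast
  qed (fact assms(4,13))+
  show ?thesis
    unfolding defects_iff_ip[symmetric] by (simp add: Lax_equations_iff_defects)
qed

end
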